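(* Let $u,s,s',V,\alpha$ be real numbers and set $$\overline{u}=2u(s-s'),\qquad \gamma=\frac{s'}{6}(1-\alpha)-u(s-s')V.$$ Define \begin{align*} R_{0,0}&=Vsu-\tfrac12Vs-Vs'u+\tfrac16\alpha s'+su-\tfrac12 s-s'u-\tfrac16 s'+1,\\ R_{0,1}&=Vsu-\tfrac12Vs-Vs'u+\tfrac16\alpha s'+\tfrac13 s',\\ R_{0,2}&=Vsu-\tfrac12Vs-Vs'u+\tfrac16\alpha s'-su+\tfrac12 s+s'u-\tfrac16 s',\\ R_{1,0}&=-2Vsu+2Vs'u-\tfrac13\alpha s'-2su+2s'u+\tfrac13 s',\\ R_{1,1}&=-2Vsu+2Vs'u-\tfrac13\alpha s'-\tfrac23 s'+1,\\ R_{1,2}&=-2Vsu+2Vs'u-\tfrac13\alpha s'+2su-2s'u+\tfrac13 s',\\ R_{2,0}&=Vsu+\tfrac12Vs-Vs'u+\tfrac16\alpha s'+su+\tfrac12 s-s'u-\tfrac16 s',\\ R_{2,1}&=Vsu+\tfrac12Vs-Vs'u+\tfrac16\alpha s'+\tfrac13 s',\\ R_{2,2}&=Vsu+\tfrac12Vs-Vs'u+\tfrac16\alpha s'-su-\tfrac12 s+s'u-\tfrac16 s'+1. \end{align*} Then $R_{i,j}\ge 0$ for all $i,j\in\{0,1,2\}$ if and only if $$\max\bigl(s'-1,\,|\overline{u}|\bigr)\le 2\gamma\le \min\bigl(2-s-|\overline{u}-sV|,\; s-|\overline{u}+sV|,\; s'-|sV|\bigr).$$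
   Context: The quantities $R_{i,j}$ are the entries of the relaxation matrix of the D1Q3 lattice Boltzmann scheme (velocities $-1,0,1$) with relative velocity $u$, advection velocity parameter $V$, equilibrium parameter $\alpha$ and relaxation parameters $s$ (for the first-order moment) and $s'$ (for the second-order moment); their non-negativity is equivalent to the relaxation step preserving non-negativity of the particle distributions. *)

theory Defs
  imports Complex_Main
begin

definition R :: "real \<Rightarrow> real \<Rightarrow> real \<Rightarrow> real \<Rightarrow> real \<Rightarrow> nat \<Rightarrow> nat \<Rightarrow> real" where
  "R u s sp V \<alpha> i j =
    (if i = 0 \<and> j = 0 then V*s*u - 1/2*V*s - V*sp*u + 1/6*\<alpha>*sp + s*u - 1/2*s - sp*u - 1/6*sp + 1
     else if i = 0 \<and> j = 1 then V*s*u - 1/2*V*s - V*sp*u + 1/6*\<alpha>*sp + 1/3*sp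
     else if i = 0 \<and> j = 2 then V*s*u - 1/2*V*s - V*sp*u + 1/6*\<alpha>*sp - s*u + 1/2*s + sp*u - 1/6*sp
     else if i = 1 \<and> j = 0 then -2*V*s*u + 2*V*sp*u - 1/3*\<alpha>*sp - 2*s*u + 2*sp*u + 1/3*sp
     else if i = 1 \<and> j = 1 then -2*V*s*u + 2*V*sp*u - 1/3*\<alpha>*sp - 2/3*sp + 1
     else if i = 1 \<and> j = 2 then -2*V*s*u + 2*V*sp*u - 1/3*\<alpha>*sp + 2*s*u - 2*sp*u + 1/3*sp
     else if i = 2 \<and> j = 0 then V*s*u + 1/2*V*s - V*sp*u + 1/6*\<alpha>*sp + s*u + 1/2*s - sp*u - 1/6*sp
     else if i = 2 \<and> j = 1 then V*s*u + 1/2*V*s - V*sp*u + 1/6*\<alpha>*sp + 1/3*sp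
     else V*s*u + 1/2*V*s - V*sp*u + 1/6*\<alpha>*sp - s*u - 1/2*s + sp*u - 1/6*sp + 1)"

definition ubar :: "real \<Rightarrow> real \<Rightarrow> real \<Rightarrow> real" where
  "ubar u s sp = 2*u*(s - sp)"

definition gam :: "real \<Rightarrow> real \<Rightarrow> real \<Rightarrow> real \<Rightarrow> real \<Rightarrow> real" where
  "gam u s sp V \<alpha> = sp/6*(1 - \<alpha>) - u*(s - sp)*V"

end

theory Submission
  imports Defs
begin

text \<open>Every entry of the relaxation matrix is an affine function of \<open>2\<gamma>\<close>, \<open>ubar\<close> and \<open>sV\<close>.
  The entries mirrored under \<open>(i, j) \<mapsto> (2 - i, 2 - j)\<close> differ only in the sign of the
  \<open>ubar\<close>/\<open>sV\<close> part, so each mirrored pair is nonnegative exactly when one bound with an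
  absolute value holds; the centre entry gives \<open>s' - 1 \<le> 2\<gamma>\<close>.\<close>

lemma R_via_gam_ubar:
  fixes u s sp V \<alpha> :: real
  defines "G \<equiv> 2 * gam u s sp V \<alpha>" and "b \<equiv> ubar u s sp" and "c \<equiv> s * V"
  shows "R u s sp V \<alpha> 0 0 = ((2 - s) - G + (b - c)) / 2"
    and "R u s sp V \<alpha> 2 2 = ((2 - s) - G - (b - c)) / 2"
    and "R u s sp V \<alpha> 0 2 = (s - G - (b + c)) / 2"
    and "R u s sp V \<alpha> 2 0 = (s - G + (b + c)) / 2"
    and "R u s sp V \<alpha> 0 1 = (sp - G - c) / 2"
    and "R u s sp V \<alpha> 2 1 = (sp - G + c) / 2"
    and "R u s sp V \<alpha> 1 0 = G - b"
    and "R u s sp V \<alpha> 1 2 = G + b"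
    and "R u s sp V \<alpha> 1 1 = G - (sp - 1)"
  unfolding R_def G_def b_def c_def gam_def ubar_def by (simp_all add: field_simps)

lemma le_diff_abs_iff_mirrored_nonneg:
  fixes a d G :: real
  shows "G \<le> a - \<bar>d\<bar> \<longleftrightarrow> 0 \<le> (a - G + d) / 2 \<and> 0 \<le> (a - G - d) / 2"
  by auto

lemma abs_le_iff_mirrored_nonneg:
  fixes b G :: real
  shows "\<bar>b\<bar> \<le> G \<longleftrightarrow> 0 \<le> G - b \<and> 0 \<le> G + b"
  by auto

theorem proposition2:
  fixes u s sp V \<alpha> :: real
  shows "(\<forall>i\<in>{0,1,2::nat}. \<forall>j\<in>{0,1,2::nat}. R u s sp V \<alpha> i j \<ge> 0) \<longleftrightarrow>
     (max (sp - 1) \<bar>ubar u s sp\<bar> \<le> 2 * gam u s sp V \<alpha> \<and>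
      2 * gam u s sp V \<alpha> \<le> min (2 - s - \<bar>ubar u s sp - s*V\<bar>)
                                (min (s - \<bar>ubar u s sp + s*V\<bar>) (sp - \<bar>s*V\<bar>)))"
  unfolding ball_simps(5,7) R_via_gam_ubar max.bounded_iff min.bounded_iff
    le_diff_abs_iff_mirrored_nonneg abs_le_iff_mirrored_nonneg
  by auto

end
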